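(* Let $C_3$ be a positive constant. The following are equivalent: (i) For every positive integer $N$, every strictly increasing real sequence $(\lambda_k)_{k=-\infty}^\infty$, with $\delta_k:=\min\{\lambda_k-\lambda_{k-1},\lambda_{k+1}-\lambda_k\}$, and all nonnegative reals $t_1,\dots,t_N$, $$\sum_{m=1}^N\sum_{\substack{n=1\\ n\ne m}}^N\frac{\delta_m^{3/2}\delta_n^{1/2}t_mt_n}{(\lambda_m-\lambda_n)^2}\le C_3\sum_{n=1}^N t_n^2.$$ (ii) For every positive integer $M$, all real numbers $x_1,\dots,x_M$ distinct modulo $1$, and all nonnegative reals $\tau_1,\dots,\tau_M$, $$\frac13\sum_{m=1}^M d_m^2\tau_m^2+\sum_{m=1}^M\sum_{\substack{n=1\\ n\ne m}}^M\frac{d_m^{3/2}d_n^{1/2}\tau_m\tau_n}{\sin^2(\pi(x_m-x_n))}\le\frac{C_3}{\pi^2}\sum_{m=1}^M\tau_m^2,$$ where $d_m:=\min_{n\ne m}\|x_n-x_m\|$ (and $d_1:=1$ if $M=1$).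
   Context: $\|x\|=\min_{k\in\mathbb Z}|x-k|$ denotes the distance from the real number $x$ to a nearest integer. *)

theory Defs
  imports "HOL-Analysis.Analysis"
begin

definition dnint :: "real \<Rightarrow> real" where
  "dnint x = Inf {\<bar>x - of_int k\<bar> | k. True}"

definition gapdelta :: "(int \<Rightarrow> real) \<Rightarrow> int \<Rightarrow> real" where
  "gapdelta lam k = min (lam k - lam (k - 1)) (lam (k + 1) - lam k)"

definition mindist :: "nat \<Rightarrow> (nat \<Rightarrow> real) \<Rightarrow> nat \<Rightarrow> real" where
  "mindist M x m = (if M = 1 then 1
     else Min {dnint (x n - x m) | n. n \<in> {1..M} \<and> n \<noteq> m})"

end

theory Submission
  imports Defs
begin

text \<open>
  (ii) \<open>\<Longrightarrow>\<close> (i): shrinking \<open>\<lambda>_1 < ... < \<lambda>_N\<close> by a factor \<open>\<epsilon>\<close> into an interval of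
  length 1/2 gives points on the circle with \<open>d_m \<ge> \<epsilon> \<delta>_m\<close>, while
  \<open>sin^2 (\<pi> \<epsilon> (\<lambda>_m - \<lambda>_n)) \<le> \<pi>^2 \<epsilon>^2 (\<lambda>_m - \<lambda>_n)^2\<close>; so each term of (i) is at most \<open>\<pi>^2\<close>
  times the corresponding term of (ii).

  (i) \<open>\<Longrightarrow>\<close> (ii): sort the fractional parts \<open>y_m\<close> of the \<open>x_m\<close> and repeat them with period 1;
  the gaps of the resulting increasing sequence dominate the \<open>d_m\<close>. Applying (i) to \<open>K\<close> periods
  and keeping, for each pair of points, only the translates at most \<open>J\<close> periods apart gives
  \<open>(K - 2J) W_J \<le> C3 K \<Sum>_m \<tau>_m^2\<close>, where
  \<open>W_J = \<Sum>_{m,n} d_m^{3/2} d_n^{1/2} \<tau>_m \<tau>_n \<Sum>_{|j| \<le> J} (y_m - y_n + j)^{-2}\<close>. Let \<open>K \<rightarrow> \<infinity>\<close>, then \<open>J \<rightarrow> \<infinity>\<close>, and use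
  \<open>\<Sum>_j (u + j)^-2 = \<pi>^2 / sin^2 (\<pi> u)\<close>, obtained from the reflection formula for the Gamma
  function by differentiating twice.
\<close>

section \<open>Partial fractions of \<open>1 / sin\<^sup>2\<close>\<close>

lemma Gamma_reflection_real:
  fixes u :: real
  shows "Gamma u * Gamma (1 - u) = pi / sin (pi * u)"
proof -
  have "Gamma (complex_of_real u) * Gamma (1 - complex_of_real u)
          = of_real pi / sin (of_real pi * of_real u)"
    by (rule Gamma_reflection_complex)
  also have "Gamma (1 - complex_of_real u) = of_real (Gamma (1 - u))"
    by (metis Gamma_complex_of_real of_real_1 of_real_diff)
  also have "sin (of_real pi * of_real u) = complex_of_real (sin (pi * u))"
    by (metis of_real_mult sin_of_real)
  finally show ?thesis
    by (metis Gamma_complex_of_real of_real_divide of_real_eq_iff of_real_mult)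
qed

lemma Digamma_reflection_real:
  fixes u :: real
  assumes "0 < u" "u < 1"
  shows "Digamma u - Digamma (1 - u) = - pi * cos (pi * u) / sin (pi * u)"
proof -
  have sin_pos: "sin (pi * v) > 0" if "0 < v" "v < 1" for v
    using that by (intro sin_gt_zero) auto
  have deriv: "((\<lambda>v. Gamma v * Gamma (1 - v) * sin (pi * v)) has_real_derivative
          Gamma u * Gamma (1 - u) * (sin (pi * u) * (Digamma u - Digamma (1 - u)) + pi * cos (pi * u)))
        (at u)"
    using assms by (auto intro!: derivative_eq_intros dest: nonpos_Ints_nonpos simp: algebra_simps)
  have const: "\<forall>v. \<bar>u - v\<bar> < min u (1 - u) \<longrightarrow>
      Gamma u * Gamma (1 - u) * sin (pi * u) = Gamma v * Gamma (1 - v) * sin (pi * v)"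
  proof (intro allI impI)
    fix v assume "\<bar>u - v\<bar> < min u (1 - u)"
    then have "0 < v" "v < 1"
      by auto
    then show "Gamma u * Gamma (1 - u) * sin (pi * u) = Gamma v * Gamma (1 - v) * sin (pi * v)"
      using assms sin_pos[of u] sin_pos[of v] by (simp add: Gamma_reflection_real)
  qed
  have "Gamma u * Gamma (1 - u) * (sin (pi * u) * (Digamma u - Digamma (1 - u)) + pi * cos (pi * u)) = 0"
    by (rule DERIV_local_const[OF deriv _ const]) (use assms in simp)
  moreover have "Gamma u * Gamma (1 - u) > 0"
    using assms by simp
  ultimately have "sin (pi * u) * (Digamma u - Digamma (1 - u)) + pi * cos (pi * u) = 0"
    by (metis mult_eq_0_iff less_irrefl)
  then show ?thesis
    using assms sin_pos[of u] by (simp add: field_simps)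
qed

lemma Polygamma_1_reflection_real:
  fixes u :: real
  assumes "0 < u" "u < 1"
  shows "Polygamma 1 u + Polygamma 1 (1 - u) = pi^2 / (sin (pi * u))^2"
proof -
  have sin_pos: "sin (pi * u) > 0"
    using assms by (intro sin_gt_zero) auto
  have cos_sq: "cos (pi * u) * cos (pi * u) = 1 - sin (pi * u) * sin (pi * u)"
    using sin_cos_squared_add3[of "pi * u"] by linarith
  have deriv: "((\<lambda>v. Digamma v - Digamma (1 - v) + pi * cos (pi * v) / sin (pi * v)) has_real_derivative
          Polygamma 1 u + Polygamma 1 (1 - u) - pi^2 / (sin (pi * u))^2) (at u)"
    using assms sin_pos
    by (auto intro!: derivative_eq_intros dest: nonpos_Ints_nonpos simp: field_simps power2_eq_square cos_sq)
  have const: "\<forall>v. \<bar>u - v\<bar> < min u (1 - u) \<longrightarrow>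
      Digamma u - Digamma (1 - u) + pi * cos (pi * u) / sin (pi * u)
        = Digamma v - Digamma (1 - v) + pi * cos (pi * v) / sin (pi * v)"
    using assms by (auto simp: Digamma_reflection_real)
  have "Polygamma 1 u + Polygamma 1 (1 - u) - pi^2 / (sin (pi * u))^2 = 0"
    by (rule DERIV_local_const[OF deriv _ const]) (use assms in simp)
  then show ?thesis by simp
qed

definition recip_sq_sum :: "nat \<Rightarrow> real \<Rightarrow> real" where
  "recip_sq_sum J u = (\<Sum>j\<in>{-int J..int J}. 1 / (u + of_int j)^2)"

text \<open>The sum of \<open>1/(u + j)^2\<close> over all integers \<open>j\<close>, for \<open>|u| < 1\<close>. At \<open>u = 0\<close> the term
  \<open>j = 0\<close> is \<open>1/0 = 0\<close> in HOL, leaving \<open>2 \<zeta>(2) = \<pi>^2/3\<close>: the diagonal coefficient 1/3 of (ii).\<close>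
definition recip_sq_series :: "real \<Rightarrow> real" where
  "recip_sq_series u = (if u = 0 then pi^2 / 3 else pi^2 / (sin (pi * u))^2)"

lemma recip_sq_sum_Suc:
  "recip_sq_sum (Suc J) u = recip_sq_sum J u + 1 / (u + real (Suc J))^2 + 1 / (u - real (Suc J))^2"
proof -
  have "{-int (Suc J)..int (Suc J)} = insert (int (Suc J)) (insert (- int (Suc J)) {-int J..int J})"
    by auto
  then show ?thesis
    unfolding recip_sq_sum_def by (simp add: algebra_simps)
qed

lemma recip_sq_sum_eq_Polygamma_partial_sums:
  "recip_sq_sum J u = (\<Sum>k<Suc J. 1 / (u + real k)^2) + (\<Sum>k<J. 1 / ((1 - u) + real k)^2)"
proof (induction J)
  case 0
  then show ?case by (simp add: recip_sq_sum_def)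
next
  case (Suc J)
  have "(u - real (Suc J))^2 = ((1 - u) + real J)^2"
    by (simp add: power2_eq_square algebra_simps)
  then show ?case
    unfolding recip_sq_sum_Suc Suc by simp
qed

lemma recip_sq_sum_minus: "recip_sq_sum J (- u) = recip_sq_sum J u"
  unfolding recip_sq_sum_def
  by (rule sum.reindex_bij_witness[of _ uminus uminus]) (auto simp: power2_commute)

lemma recip_sq_sum_0: "recip_sq_sum J 0 = 2 * (\<Sum>k<J. 1 / real ((k + 1)^2))"
  unfolding recip_sq_sum_eq_Polygamma_partial_sums sum.lessThan_Suc_shift by (simp add: add.commute)

lemma recip_sq_sum_tendsto_pos:
  assumes "0 < u" "u < 1"
  shows "(\<lambda>J. recip_sq_sum J u) \<longlonglongrightarrow> pi^2 / (sin (pi * u))^2"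
proof -
  have "(\<lambda>n. \<Sum>k<n. 1 / (v + real k)^2) \<longlonglongrightarrow> Polygamma 1 v" if "v > 0" for v :: real
  proof -
    have "(\<lambda>k. inverse ((v + of_nat k)^Suc 1)) sums ((-1)^Suc 1 * Polygamma 1 v / fact 1)"
      using that by (intro Polygamma_LIMSEQ) auto
    then show ?thesis
      by (simp add: sums_def inverse_eq_divide power2_eq_square)
  qed
  from LIMSEQ_Suc[OF this[of u]] this[of "1 - u"] assms
  have "(\<lambda>J. (\<Sum>k<Suc J. 1 / (u + real k)^2) + (\<Sum>k<J. 1 / ((1 - u) + real k)^2))
          \<longlonglongrightarrow> Polygamma 1 u + Polygamma 1 (1 - u)"
    by (intro tendsto_add) auto
  then show ?thesis
    using Polygamma_1_reflection_real[OF assms] by (simp add: recip_sq_sum_eq_Polygamma_partial_sums)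
qed

lemma recip_sq_sum_tendsto:
  assumes "\<bar>u\<bar> < 1"
  shows "(\<lambda>J. recip_sq_sum J u) \<longlonglongrightarrow> recip_sq_series u"
proof -
  consider "u = 0" | "0 < u" | "0 < - u"
    by linarith
  then show ?thesis
  proof cases
    case 1
    have "(\<lambda>J. 2 * (\<Sum>k<J. 1 / real ((k + 1)^2))) \<longlonglongrightarrow> 2 * (pi^2 / 6)"
      using inverse_squares_sums by (intro tendsto_mult tendsto_const) (simp add: sums_def)
    with 1 show ?thesis
      by (simp add: recip_sq_sum_0 recip_sq_series_def)
  next
    case 2
    with assms show ?thesis
      using recip_sq_sum_tendsto_pos[of u] by (simp add: recip_sq_series_def)
  next
    case 3
    with assms show ?thesis
      using recip_sq_sum_tendsto_pos[of "- u"] by (simp add: recip_sq_series_def recip_sq_sum_minus)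
  qed
qed

lemma Toeplitz_sum_ge:
  fixes g :: "int \<Rightarrow> real"
  assumes nonneg: "\<And>j. g j \<ge> 0" and "2 * J \<le> K"
  shows "real (K - 2 * J) * (\<Sum>j\<in>{-int J..int J}. g j) \<le> (\<Sum>q<K. \<Sum>q'<K. g (int q - int q'))"
proof -
  have row: "(\<Sum>j\<in>{-int J..int J}. g j) \<le> (\<Sum>q<K. g (int q - int q'))"
    if q': "q' \<in> {J..<K - J}" for q'
  proof -
    have "(\<Sum>j\<in>{-int J..int J}. g j) = (\<Sum>q\<in>{q' - J..q' + J}. g (int q - int q'))"
      by (rule sum.reindex_bij_witness[of _ "\<lambda>q. int q - int q'" "\<lambda>j. nat (int q' + j)"])
        (use q' in auto)
    also have "\<dots> \<le> (\<Sum>q<K. g (int q - int q'))"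
      by (rule sum_mono2) (use q' nonneg in auto)
    finally show ?thesis .
  qed
  have "real (K - 2 * J) * (\<Sum>j\<in>{-int J..int J}. g j) = (\<Sum>q'\<in>{J..<K - J}. \<Sum>j\<in>{-int J..int J}. g j)"
    using assms(2) by simp
  also have "\<dots> \<le> (\<Sum>q'\<in>{J..<K - J}. \<Sum>q<K. g (int q - int q'))"
    by (rule sum_mono) (rule row)
  also have "\<dots> \<le> (\<Sum>q'<K. \<Sum>q<K. g (int q - int q'))"
    by (rule sum_mono2) (auto intro: sum_nonneg nonneg)
  also have "\<dots> = (\<Sum>q<K. \<Sum>q'<K. g (int q - int q'))"
    by (rule sum.swap)
  finally show ?thesis .
qed

lemma sum_atLeastAtMost_int_blocks:
  "(\<Sum>i\<in>{1..int (K * M)}. h i) = (\<Sum>q<K. \<Sum>r<M. h (int (q * M + r) + 1))"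
proof -
  have "(\<Sum>i\<in>{1..int (K * M)}. h i) = (\<Sum>n<K * M. h (int n + 1))"
    by (rule sum.reindex_bij_witness[of _ "\<lambda>n. int n + 1" "\<lambda>i. nat (i - 1)"])
      (auto simp flip: of_nat_mult simp: nat_less_iff)
  also have "\<dots> = (\<Sum>q<K. \<Sum>n\<in>{q * M..<q * M + M}. h (int n + 1))"
    by (rule sum.nat_group[symmetric])
  also have "\<dots> = (\<Sum>q<K. \<Sum>r<M. h (int (q * M + r) + 1))"
  proof (rule sum.cong[OF refl])
    fix q
    show "(\<Sum>n\<in>{q * M..<q * M + M}. h (int n + 1)) = (\<Sum>r<M. h (int (q * M + r) + 1))"
      by (rule sum.reindex_bij_witness[of _ "\<lambda>r. q * M + r" "\<lambda>n. n - q * M"]) auto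
  qed
  finally show ?thesis .
qed

lemma sum_atLeastAtMost_of_nat: "(\<Sum>m\<in>{1..int N}. f m) = (\<Sum>m\<in>{1..N}. f (int m))"
  by (rule sum.reindex_bij_witness[of _ int nat]) auto

lemma sum_off_diagonal_of_nat:
  "(\<Sum>m\<in>{1..int N}. \<Sum>n\<in>{1..int N} - {m}. f m n) = (\<Sum>m\<in>{1..N}. \<Sum>n\<in>{1..N} - {m}. f (int m) (int n))"
  unfolding sum_atLeastAtMost_of_nat
  by (intro sum.cong refl sum.reindex_bij_witness[of _ int nat]) auto

lemma sum_sum_reindex_bij_betw:
  assumes "bij_betw \<sigma> A B"
  shows "(\<Sum>a\<in>A. \<Sum>a'\<in>A. f (\<sigma> a) (\<sigma> a')) = (\<Sum>b\<in>B. \<Sum>b'\<in>B. f b b')"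
proof -
  have "(\<Sum>a\<in>A. \<Sum>a'\<in>A. f (\<sigma> a) (\<sigma> a')) = (\<Sum>a\<in>A. \<Sum>b'\<in>B. f (\<sigma> a) b')"
    by (intro sum.cong refl sum.reindex_bij_betw[OF assms])
  also have "\<dots> = (\<Sum>b\<in>B. \<Sum>b'\<in>B. f b b')"
    by (rule sum.reindex_bij_betw[OF assms])
  finally show ?thesis .
qed

lemma le_of_eventually_scaled_le:
  fixes a w b :: real
  assumes "\<And>K. K \<ge> L \<Longrightarrow> (real K - a) * w \<le> real K * b"
  shows "w \<le> b"
proof (rule LIMSEQ_le_const2)
  have "(\<lambda>K. (1 - a / real K) * w) \<longlonglongrightarrow> (1 - 0) * w"
    by (intro tendsto_intros lim_const_over_n)
  then show "(\<lambda>K. (1 - a / real K) * w) \<longlonglongrightarrow> w"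
    by simp
  have "(1 - a / real K) * w \<le> b" if "K \<ge> max L 1" for K
    using assms[of K] that by (simp add: field_simps)
  then show "\<exists>N. \<forall>K\<ge>N. (1 - a / real K) * w \<le> b"
    by blast
qed

section \<open>Distances modulo 1\<close>

lemma frac_diff_eq: "frac a - frac b = a - b - of_int (\<lfloor>a\<rfloor> - \<lfloor>b\<rfloor>)"
  by (simp add: frac_def)

lemma diff_Ints_if_frac_eq:
  assumes "frac a = frac b"
  shows "a - b \<in> \<int>"
proof -
  have "a - b = of_int (\<lfloor>a\<rfloor> - \<lfloor>b\<rfloor>)"
    using assms frac_diff_eq[of a b] by simp
  then show ?thesis
    by simp
qed

lemma Ints_abs_less_1: "(y :: real) \<in> \<int> \<Longrightarrow> \<bar>y\<bar> < 1 \<Longrightarrow> y = 0"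
  by (auto elim!: Ints_cases)

lemma sin_sq_pi_diff_of_int: "(sin (pi * (z - of_int k)))^2 = (sin (pi * z))^2"
proof -
  have sin_0: "sin (pi * of_int k) = 0"
    by (simp add: sin_zero_iff_int2)
  then have "(cos (pi * of_int k))^2 = 1"
    using sin_cos_squared_add[of "pi * of_int k"] by simp
  with sin_0 show ?thesis
    by (simp add: right_diff_distrib sin_diff power_mult_distrib)
qed

lemma sin_pi_neq_0: "y \<notin> \<int> \<Longrightarrow> sin (pi * y) \<noteq> 0"
  by (auto simp: sin_zero_iff_int2)

lemma dnint_le: "dnint y \<le> \<bar>y - of_int k\<bar>"
  unfolding dnint_def by (rule cInf_lower) (auto intro: bdd_belowI[of _ 0])

lemma dnint_nonneg: "dnint y \<ge> 0"
  unfolding dnint_def by (rule cInf_greatest) auto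

lemma dnint_le_1: "dnint y \<le> 1"
  using dnint_le[of y "\<lfloor>y\<rfloor>"] by linarith

lemma dnint_eq_abs:
  assumes "\<bar>y\<bar> \<le> 1/2"
  shows "dnint y = \<bar>y\<bar>"
  unfolding dnint_def
proof (rule cInf_eq_minimum)
  show "\<bar>y\<bar> \<in> {\<bar>y - of_int k\<bar> | k. True}"
    by (rule CollectI, rule exI[of _ 0]) simp
next
  fix z assume "z \<in> {\<bar>y - of_int k\<bar> | k. True}"
  then obtain k where z: "z = \<bar>y - of_int k\<bar>"
    by auto
  show "\<bar>y\<bar> \<le> z"
  proof (cases "k = 0")
    case False
    then have "\<bar>real_of_int k\<bar> \<ge> 1"
      by linarith
    with assms z show ?thesis
      by linarith
  qed (use z in simp)
qed

lemma mindist_le: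
  assumes "m \<in> {1..M}" "n \<in> {1..M}" "n \<noteq> m"
  shows "mindist M x m \<le> dnint (x n - x m)"
proof -
  have "finite {dnint (x n - x m) | n. n \<in> {1..M} \<and> n \<noteq> m}"
    by simp
  with assms show ?thesis
    unfolding mindist_def by (auto intro: Min_le)
qed

lemma mindist_ge:
  assumes "2 \<le> M" "m \<in> {1..M}" "\<And>n. n \<in> {1..M} \<Longrightarrow> n \<noteq> m \<Longrightarrow> c \<le> dnint (x n - x m)"
  shows "c \<le> mindist M x m"
proof -
  have "(if m = 1 then 2 else 1) \<in> {n. n \<in> {1..M} \<and> n \<noteq> m}"
    using assms(1,2) by auto
  then have "{dnint (x n - x m) | n. n \<in> {1..M} \<and> n \<noteq> m} \<noteq> {}"
    by blast
  with assms show ?thesis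
    unfolding mindist_def by (auto intro: Min.boundedI)
qed

lemma mindist_bounds:
  assumes "m \<in> {1..M}"
  shows "0 \<le> mindist M x m \<and> mindist M x m \<le> 1"
proof (cases "M = 1")
  case False
  with assms have "2 \<le> M" "(if m = 1 then 2 else 1) \<in> {1..M}" "(if m = 1 then 2 else 1) \<noteq> m"
    by auto
  with assms show ?thesis
    using mindist_ge[of M m 0 x] mindist_le[of m M _ x] dnint_nonneg dnint_le_1 by (meson order_trans)
qed (simp add: mindist_def)

lemma gapdelta_pos: "strict_mono lam \<Longrightarrow> gapdelta lam i > 0"
  unfolding gapdelta_def by (auto simp: strict_mono_less)

lemma gapdelta_le_dist:
  assumes "strict_mono (lam :: int \<Rightarrow> real)" "i \<noteq> j"
  shows "gapdelta lam i \<le> \<bar>lam j - lam i\<bar>"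
proof (cases "i < j")
  case True
  then have "lam (i + 1) \<le> lam j" "lam i < lam j"
    using assms(1) by (simp_all add: strict_mono_less_eq strict_mono_less)
  then show ?thesis
    unfolding gapdelta_def by auto
next
  case False
  with assms(2) have "j \<le> i - 1" "j < i"
    by auto
  then have "lam j \<le> lam (i - 1)" "lam j < lam i"
    using assms(1) by (simp_all add: strict_mono_less_eq strict_mono_less)
  then show ?thesis
    unfolding gapdelta_def by auto
qed

definition pair_weight :: "('a \<Rightarrow> real) \<Rightarrow> ('a \<Rightarrow> real) \<Rightarrow> 'a \<Rightarrow> 'a \<Rightarrow> real" where
  "pair_weight d \<tau> m n = d m powr (3/2) * d n powr (1/2) * \<tau> m * \<tau> n"

definition line_form :: "nat \<Rightarrow> (int \<Rightarrow> real) \<Rightarrow> (int \<Rightarrow> real) \<Rightarrow> real" where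
  "line_form N lam t =
     (\<Sum>m\<in>{1..int N}. \<Sum>n\<in>{1..int N} - {m}. pair_weight (gapdelta lam) t m n / (lam m - lam n)^2)"

definition circle_form :: "nat \<Rightarrow> (nat \<Rightarrow> real) \<Rightarrow> (nat \<Rightarrow> real) \<Rightarrow> real" where
  "circle_form M x \<tau> = (1/3) * (\<Sum>m\<in>{1..M}. (mindist M x m)^2 * (\<tau> m)^2)
     + (\<Sum>m\<in>{1..M}. \<Sum>n\<in>{1..M} - {m}. pair_weight (mindist M x) \<tau> m n / (sin (pi * (x m - x n)))^2)"

definition line_inequality :: "real \<Rightarrow> bool" where
  "line_inequality C \<longleftrightarrow> (\<forall>N lam t. N \<ge> 1 \<longrightarrow> strict_mono lam \<longrightarrow> (\<forall>n\<in>{1..int N}. t n \<ge> 0) \<longrightarrow>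
     line_form N lam t \<le> C * (\<Sum>n\<in>{1..int N}. (t n)^2))"

definition circle_inequality :: "real \<Rightarrow> bool" where
  "circle_inequality C \<longleftrightarrow> (\<forall>M x \<tau>. M \<ge> 1 \<longrightarrow>
     (\<forall>m\<in>{1..M}. \<forall>n\<in>{1..M}. m \<noteq> n \<longrightarrow> x m - x n \<notin> \<int>) \<longrightarrow> (\<forall>m\<in>{1..M}. \<tau> m \<ge> 0) \<longrightarrow>
     circle_form M x \<tau> \<le> C / pi^2 * (\<Sum>m\<in>{1..M}. (\<tau> m)^2))"

lemma pair_weight_nonneg:
  "0 \<le> d m \<Longrightarrow> 0 \<le> d n \<Longrightarrow> 0 \<le> \<tau> m \<Longrightarrow> 0 \<le> \<tau> n \<Longrightarrow> 0 \<le> pair_weight d \<tau> m n"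
  unfolding pair_weight_def by simp

lemma pair_weight_mono:
  assumes "0 \<le> d m" "d m \<le> d' m" "0 \<le> d n" "d n \<le> d' n" "0 \<le> \<tau> m" "0 \<le> \<tau> n"
  shows "pair_weight d \<tau> m n \<le> pair_weight d' \<tau> m n"
  unfolding pair_weight_def using assms by (intro mult_mono powr_mono2) auto

lemma pair_weight_diag: "0 \<le> d m \<Longrightarrow> pair_weight d \<tau> m m = (d m)^2 * (\<tau> m)^2"
  unfolding pair_weight_def
  by (simp add: powr_add[symmetric] powr_numeral power2_eq_square)

lemma pair_weight_scale:
  assumes "0 \<le> c" "0 \<le> d m" "0 \<le> d n"
  shows "pair_weight (\<lambda>k. c * d k) \<tau> m n = c^2 * pair_weight d \<tau> m n"
proof -
  have "c powr (3/2) * c powr (1/2) = c^2"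
    using assms(1) by (simp add: powr_add[symmetric] powr_numeral)
  then show ?thesis
    unfolding pair_weight_def using assms by (simp add: powr_mult algebra_simps)
qed

lemma circle_form_eq_recip_sq_series:
  assumes "\<forall>m\<in>{1..M}. \<forall>n\<in>{1..M}. m \<noteq> n \<longrightarrow> x m - x n \<notin> \<int>"
  shows "pi^2 * circle_form M x \<tau>
    = (\<Sum>m\<in>{1..M}. \<Sum>n\<in>{1..M}. pair_weight (mindist M x) \<tau> m n * recip_sq_series (frac (x m) - frac (x n)))"
proof -
  have row: "(\<Sum>n\<in>{1..M}. pair_weight (mindist M x) \<tau> m n * recip_sq_series (frac (x m) - frac (x n)))
    = pi^2 * ((1/3) * ((mindist M x m)^2 * (\<tau> m)^2)
        + (\<Sum>n\<in>{1..M} - {m}. pair_weight (mindist M x) \<tau> m n / (sin (pi * (x m - x n)))^2))"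
    if m: "m \<in> {1..M}" for m
  proof -
    have frac_ne: "frac (x m) \<noteq> frac (x n)" if "n \<in> {1..M} - {m}" for n
      using assms m that diff_Ints_if_frac_eq[of "x m" "x n"] by auto
    have off_diag: "pair_weight (mindist M x) \<tau> m n * recip_sq_series (frac (x m) - frac (x n))
        = pi^2 * (pair_weight (mindist M x) \<tau> m n / (sin (pi * (x m - x n)))^2)"
      if "n \<in> {1..M} - {m}" for n
    proof -
      have "(sin (pi * (frac (x m) - frac (x n))))^2 = (sin (pi * (x m - x n)))^2"
        unfolding frac_diff_eq by (rule sin_sq_pi_diff_of_int)
      with frac_ne[OF that] show ?thesis
        by (simp add: recip_sq_series_def)
    qed
    have diag: "pair_weight (mindist M x) \<tau> m m = (mindist M x m)^2 * (\<tau> m)^2"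
      using mindist_bounds[OF m] by (simp add: pair_weight_diag)
    let ?f = "\<lambda>n. pair_weight (mindist M x) \<tau> m n * recip_sq_series (frac (x m) - frac (x n))"
    have "(\<Sum>n\<in>{1..M}. ?f n) = ?f m + (\<Sum>n\<in>{1..M} - {m}. ?f n)"
      using m by (simp add: sum.remove)
    also have "?f m = pi^2 * ((1/3) * ((mindist M x m)^2 * (\<tau> m)^2))"
      by (simp add: diag recip_sq_series_def)
    also have "(\<Sum>n\<in>{1..M} - {m}. ?f n)
        = pi^2 * (\<Sum>n\<in>{1..M} - {m}. pair_weight (mindist M x) \<tau> m n / (sin (pi * (x m - x n)))^2)"
      unfolding sum_distrib_left by (rule sum.cong[OF refl off_diag])
    finally show ?thesis
      by (simp only: distrib_left)
  qed
  have "(\<Sum>m\<in>{1..M}. \<Sum>n\<in>{1..M}.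
          pair_weight (mindist M x) \<tau> m n * recip_sq_series (frac (x m) - frac (x n)))
      = (\<Sum>m\<in>{1..M}. pi^2 * ((1/3) * ((mindist M x m)^2 * (\<tau> m)^2)
          + (\<Sum>n\<in>{1..M} - {m}. pair_weight (mindist M x) \<tau> m n / (sin (pi * (x m - x n)))^2)))"
    by (rule sum.cong[OF refl row])
  also have "\<dots> = pi^2 * circle_form M x \<tau>"
    unfolding circle_form_def by (simp add: sum.distrib sum_distrib_left distrib_left)
  finally show ?thesis
    by (rule sym)
qed

section \<open>Periodization\<close>

lemma obtain_sorted_enumeration:
  fixes y :: "'a \<Rightarrow> 'b::linorder"
  assumes "finite A" "inj_on y A"
  obtains \<sigma> where "bij_betw \<sigma> {..<card A} A" "strict_mono_on {..<card A} (y \<circ> \<sigma>)"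
proof -
  define L where "L = sorted_list_of_set (y ` A)"
  have len: "length L = card A" and set_L: "set L = y ` A"
    using assms by (simp_all add: L_def card_image)
  have "bij_betw (nth L) {..<card A} (y ` A)"
    using bij_betw_nth[of L] len set_L by (simp add: L_def lessThan_def)
  moreover have "bij_betw (inv_into A y) (y ` A) A"
    using assms(2) by (simp add: bij_betw_inv_into inj_on_imp_bij_betw)
  ultimately have bij: "bij_betw (inv_into A y \<circ> nth L) {..<card A} A"
    by (rule bij_betw_trans)
  have "(y \<circ> (inv_into A y \<circ> nth L)) r = L ! r" if "r < card A" for r
    using that len set_L nth_mem[of r L] by (simp add: f_inv_into_f)
  moreover have "sorted_wrt (<) L"
    unfolding L_def by (rule strict_sorted_list_of_set)
  ultimately have "strict_mono_on {..<card A} (y \<circ> (inv_into A y \<circ> nth L))"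
    using len by (auto intro!: strict_mono_onI simp: sorted_wrt_iff_nth_less)
  with bij show ?thesis
    by (rule that)
qed

definition block_res :: "nat \<Rightarrow> int \<Rightarrow> nat" where
  "block_res M i = nat ((i - 1) mod int M)"

definition block_quot :: "nat \<Rightarrow> int \<Rightarrow> int" where
  "block_quot M i = (i - 1) div int M"

text \<open>Writing \<open>i = qM + r + 1\<close> with \<open>0 \<le> r < M\<close>, the point \<open>e r + q\<close>: the configuration
  \<open>e 0 < \<dots> < e (M - 1)\<close> in \<open>[0, 1)\<close> repeated with period 1 and numbered from 1.\<close>
definition periodic_ext :: "nat \<Rightarrow> (nat \<Rightarrow> real) \<Rightarrow> int \<Rightarrow> real" where
  "periodic_ext M e i = e (block_res M i) + of_int (block_quot M i)"

lemma block_res_less: "0 < M \<Longrightarrow> block_res M i < M"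
  unfolding block_res_def by (simp add: nat_less_iff)

lemma block_decomp: "0 < M \<Longrightarrow> i = block_quot M i * int M + int (block_res M i) + 1"
  unfolding block_res_def block_quot_def by simp

lemma block_res_index: "r < M \<Longrightarrow> block_res M (int (q * M + r) + 1) = r"
  unfolding block_res_def by (simp flip: of_nat_mult of_nat_add zmod_int)

lemma block_quot_index: "r < M \<Longrightarrow> block_quot M (int (q * M + r) + 1) = int q"
  unfolding block_quot_def by (simp flip: of_nat_mult of_nat_add zdiv_int)

lemma strict_mono_periodic_ext:
  assumes "0 < M" "strict_mono_on {..<M} e" "\<And>r. r < M \<Longrightarrow> 0 \<le> e r \<and> e r < 1"
  shows "strict_mono (periodic_ext M e)"
proof (rule strict_monoI)
  fix i j :: int
  assume "i < j"
  let ?q = "block_quot M" and ?r = "block_res M"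
  have e_i: "0 \<le> e (?r i) \<and> e (?r i) < 1" and e_j: "0 \<le> e (?r j) \<and> e (?r j) < 1"
    using assms(1,3) block_res_less by auto
  have "?q i \<le> ?q j"
    unfolding block_quot_def using \<open>i < j\<close> assms(1) by (intro zdiv_mono1) auto
  then consider "?q i < ?q j" | "?q i = ?q j"
    by linarith
  then show "periodic_ext M e i < periodic_ext M e j"
  proof cases
    case 1
    then have "real_of_int (?q i) + 1 \<le> real_of_int (?q j)"
      by linarith
    with e_i e_j show ?thesis
      unfolding periodic_ext_def by linarith
  next
    case 2
    have "int (?r i) < int (?r j)"
      using \<open>i < j\<close> block_decomp[OF assms(1), of i] block_decomp[OF assms(1), of j]
      unfolding 2 by linarith
    then have "?r i < ?r j"
      by simp
    with assms(1,2) 2 show ?thesis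
      unfolding periodic_ext_def by (simp add: block_res_less strict_mono_onD)
  qed
qed

text \<open>In the application \<open>e\<close> are the sorted fractional parts \<open>y\<close>, \<open>D\<close> the distances \<open>d\<close> and
  \<open>w\<close> the weights \<open>\<tau>\<close>.\<close>
locale periodic_configuration =
  fixes M :: nat and e D w :: "nat \<Rightarrow> real"
  assumes M_pos: "0 < M"
    and e_mono: "strict_mono_on {..<M} e"
    and e_range: "\<And>r. r < M \<Longrightarrow> 0 \<le> e r \<and> e r < 1"
    and D_range: "\<And>r. r < M \<Longrightarrow> 0 \<le> D r \<and> D r \<le> 1"
    and D_le_dist: "\<And>r r' j. r < M \<Longrightarrow> r' < M \<Longrightarrow> r \<noteq> r' \<Longrightarrow> D r \<le> \<bar>e r - e r' + of_int j\<bar>"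
    and w_nonneg: "\<And>r. r < M \<Longrightarrow> 0 \<le> w r"
begin

abbreviation lam :: "int \<Rightarrow> real" where
  "lam \<equiv> periodic_ext M e"

abbreviation t :: "int \<Rightarrow> real" where
  "t i \<equiv> w (block_res M i)"

lemma strict_mono_lam: "strict_mono lam"
  using M_pos e_mono e_range by (rule strict_mono_periodic_ext)

lemma D_le_lam_dist:
  assumes "i \<noteq> i'"
  shows "D (block_res M i) \<le> \<bar>lam i - lam i'\<bar>"
proof (cases "block_res M i = block_res M i'")
  case True
  have "block_quot M i \<noteq> block_quot M i'"
  proof
    assume "block_quot M i = block_quot M i'"
    with True have "i = i'"
      by (metis block_decomp[OF M_pos])
    with assms show False ..
  qed
  then have "1 \<le> \<bar>block_quot M i - block_quot M i'\<bar>"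
    by linarith
  then have "1 \<le> \<bar>real_of_int (block_quot M i) - real_of_int (block_quot M i')\<bar>"
    by (metis of_int_1_le_iff of_int_abs of_int_diff)
  moreover have "lam i - lam i' = real_of_int (block_quot M i) - real_of_int (block_quot M i')"
    using True unfolding periodic_ext_def by simp
  moreover have "D (block_res M i) \<le> 1"
    using D_range[OF block_res_less[OF M_pos]] by blast
  ultimately show ?thesis
    by linarith
next
  case False
  then show ?thesis
    using D_le_dist[OF block_res_less[OF M_pos] block_res_less[OF M_pos] False,
        of "block_quot M i - block_quot M i'"]
    unfolding periodic_ext_def by (simp add: algebra_simps)
qed

lemma D_le_gapdelta: "D (block_res M i) \<le> gapdelta lam i"
proof -
  have "lam (i - 1) < lam i" "lam i < lam (i + 1)"
    using strict_mono_lam by (simp_all add: strict_mono_less)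
  then show ?thesis
    using D_le_lam_dist[of i "i - 1"] D_le_lam_dist[of i "i + 1"] unfolding gapdelta_def by auto
qed

lemma pair_sum_blocks:
  "(\<Sum>i\<in>{1..int (K * M)}. \<Sum>i'\<in>{1..int (K * M)}.
      pair_weight (\<lambda>i. D (block_res M i)) t i i' / (lam i - lam i')^2)
   = (\<Sum>r<M. \<Sum>r'<M. pair_weight D w r r' *
        (\<Sum>q<K. \<Sum>q'<K. 1 / (e r - e r' + of_int (int q - int q'))^2))"
  (is "?lhs = ?rhs")
proof -
  let ?f = "\<lambda>q r q' r'. pair_weight D w r r' * (1 / (e r - e r' + of_int (int q - int q'))^2)"
  have block: "pair_weight (\<lambda>i. D (block_res M i)) t (int (q * M + r) + 1) (int (q' * M + r') + 1)
      / (lam (int (q * M + r) + 1) - lam (int (q' * M + r') + 1))^2 = ?f q r q' r'"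
    if "r < M" "r' < M" for q r q' r'
    unfolding pair_weight_def periodic_ext_def block_res_index[OF that(1)] block_quot_index[OF that(1)]
      block_res_index[OF that(2)] block_quot_index[OF that(2)]
    by (simp add: algebra_simps)
  have "?lhs = (\<Sum>q<K. \<Sum>r<M. \<Sum>q'<K. \<Sum>r'<M. ?f q r q' r')"
    unfolding sum_atLeastAtMost_int_blocks by (intro sum.cong refl block) auto
  also have "\<dots> = (\<Sum>r<M. \<Sum>q<K. \<Sum>q'<K. \<Sum>r'<M. ?f q r q' r')"
    by (rule sum.swap)
  also have "\<dots> = (\<Sum>r<M. \<Sum>q<K. \<Sum>r'<M. \<Sum>q'<K. ?f q r q' r')"
    by (intro sum.cong refl sum.swap)
  also have "\<dots> = (\<Sum>r<M. \<Sum>r'<M. \<Sum>q<K. \<Sum>q'<K. ?f q r q' r')"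
    by (intro sum.cong refl sum.swap)
  also have "\<dots> = ?rhs"
    by (simp add: sum_distrib_left)
  finally show ?thesis .
qed

lemma line_form_periodic_ext_ge:
  assumes "2 * J \<le> K"
  shows "real (K - 2 * J) * (\<Sum>r<M. \<Sum>r'<M. pair_weight D w r r' * recip_sq_sum J (e r - e r'))
    \<le> line_form (K * M) lam t"
proof -
  let ?I = "{1..int (K * M)}"
  have "real (K - 2 * J) * (\<Sum>r<M. \<Sum>r'<M. pair_weight D w r r' * recip_sq_sum J (e r - e r'))
      = (\<Sum>r<M. \<Sum>r'<M. pair_weight D w r r' * (real (K - 2 * J) * recip_sq_sum J (e r - e r')))"
    by (simp add: sum_distrib_left algebra_simps)
  also have "\<dots> \<le> (\<Sum>r<M. \<Sum>r'<M. pair_weight D w r r' *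
        (\<Sum>q<K. \<Sum>q'<K. 1 / (e r - e r' + of_int (int q - int q'))^2))"
    unfolding recip_sq_sum_def using assms D_range w_nonneg
    by (intro sum_mono mult_left_mono Toeplitz_sum_ge pair_weight_nonneg) auto
  also have "\<dots> = (\<Sum>i\<in>?I. \<Sum>i'\<in>?I. pair_weight (\<lambda>i. D (block_res M i)) t i i' / (lam i - lam i')^2)"
    by (rule pair_sum_blocks[symmetric])
  also have "\<dots> \<le> (\<Sum>i\<in>?I. \<Sum>i'\<in>?I. pair_weight (gapdelta lam) t i i' / (lam i - lam i')^2)"
    using D_range w_nonneg block_res_less[OF M_pos] D_le_gapdelta
    by (intro sum_mono divide_right_mono pair_weight_mono) auto
  also have "\<dots> = line_form (K * M) lam t"
    \<comment> \<open>the diagonal terms vanish, being divisions by 0\<close>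
    unfolding line_form_def by (intro sum.cong refl sum.mono_neutral_right) auto
  finally show ?thesis .
qed

lemma sum_t_squared: "(\<Sum>i\<in>{1..int (K * M)}. (t i)^2) = real K * (\<Sum>r<M. (w r)^2)"
proof -
  have "(\<Sum>i\<in>{1..int (K * M)}. (t i)^2) = (\<Sum>q<K. \<Sum>r<M. (w r)^2)"
    unfolding sum_atLeastAtMost_int_blocks by (intro sum.cong refl) (simp only: lessThan_iff block_res_index)
  then show ?thesis
    by simp
qed

lemma series_form_le:
  assumes "line_inequality C"
  shows "(\<Sum>r<M. \<Sum>r'<M. pair_weight D w r r' * recip_sq_series (e r - e r')) \<le> C * (\<Sum>r<M. (w r)^2)"
proof (rule LIMSEQ_le_const2)
  let ?W = "\<lambda>J. \<Sum>r<M. \<Sum>r'<M. pair_weight D w r r' * recip_sq_sum J (e r - e r')"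
  show "?W \<longlonglongrightarrow> (\<Sum>r<M. \<Sum>r'<M. pair_weight D w r r' * recip_sq_series (e r - e r'))"
  proof (intro tendsto_sum tendsto_mult_left recip_sq_sum_tendsto)
    fix r r' assume "r \<in> {..<M}" "r' \<in> {..<M}"
    then show "\<bar>e r - e r'\<bar> < 1"
      using e_range[of r] e_range[of r'] by auto
  qed
  have "?W J \<le> C * (\<Sum>r<M. (w r)^2)" for J
  proof (rule le_of_eventually_scaled_le[where L = "2 * J + 1" and a = "2 * real J"])
    fix K assume K: "2 * J + 1 \<le> K"
    have bound: "line_form (K * M) lam t \<le> C * (\<Sum>i\<in>{1..int (K * M)}. (t i)^2)"
      using K M_pos w_nonneg block_res_less[OF M_pos]
      by (intro assms[unfolded line_inequality_def, rule_format] strict_mono_lam) (auto simp: Suc_le_eq)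
    have "2 * J \<le> K"
      using K by simp
    then have "(real K - 2 * real J) * ?W J \<le> line_form (K * M) lam t"
      using line_form_periodic_ext_ge[of J K] by (simp only: of_nat_diff of_nat_mult of_nat_numeral)
    also have "\<dots> \<le> C * (real K * (\<Sum>r<M. (w r)^2))"
      using bound unfolding sum_t_squared .
    also have "\<dots> = real K * (C * (\<Sum>r<M. (w r)^2))"
      by (rule mult.left_commute)
    finally show "(real K - 2 * real J) * ?W J \<le> real K * (C * (\<Sum>r<M. (w r)^2))" .
  qed
  then show "\<exists>N. \<forall>J\<ge>N. ?W J \<le> C * (\<Sum>r<M. (w r)^2)"
    by blast
qed

end

lemma line_inequality_imp_circle_inequality:
  assumes "line_inequality C"
  shows "circle_inequality C"
  unfolding circle_inequality_def
proof (intro allI impI)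
  fix M :: nat and x \<tau> :: "nat \<Rightarrow> real"
  assume M: "M \<ge> 1" and distinct: "\<forall>m\<in>{1..M}. \<forall>n\<in>{1..M}. m \<noteq> n \<longrightarrow> x m - x n \<notin> \<int>"
    and \<tau>: "\<forall>m\<in>{1..M}. \<tau> m \<ge> 0"
  have "inj_on (\<lambda>m. frac (x m)) {1..M}"
    using distinct diff_Ints_if_frac_eq by (intro inj_onI) fastforce
  then obtain \<sigma> where \<sigma>: "bij_betw \<sigma> {..<M} {1..M}"
    and mono: "strict_mono_on {..<M} ((\<lambda>m. frac (x m)) \<circ> \<sigma>)"
    using obtain_sorted_enumeration[of "{1..M}"] by auto
  have \<sigma>_in: "\<sigma> r \<in> {1..M}" if "r < M" for r
    using \<sigma> that by (auto dest: bij_betwE)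
  interpret periodic_configuration M "\<lambda>r. frac (x (\<sigma> r))" "\<lambda>r. mindist M x (\<sigma> r)" "\<lambda>r. \<tau> (\<sigma> r)"
  proof
    fix r r' j assume r: "r < M" "r' < M" "r \<noteq> r'"
    then have "\<sigma> r' \<noteq> \<sigma> r"
      using \<sigma> by (auto dest: bij_betw_imp_inj_on inj_onD)
    then have "mindist M x (\<sigma> r) \<le> dnint (x (\<sigma> r') - x (\<sigma> r))"
      using r \<sigma>_in by (intro mindist_le) auto
    also have "\<dots> \<le> \<bar>x (\<sigma> r') - x (\<sigma> r) - of_int (\<lfloor>x (\<sigma> r')\<rfloor> - \<lfloor>x (\<sigma> r)\<rfloor> + j)\<bar>"
      by (rule dnint_le)
    also have "\<dots> = \<bar>frac (x (\<sigma> r)) - frac (x (\<sigma> r')) + of_int j\<bar>"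
      unfolding frac_diff_eq by simp
    finally show "mindist M x (\<sigma> r) \<le> \<bar>frac (x (\<sigma> r)) - frac (x (\<sigma> r')) + of_int j\<bar>" .
  qed (use M mono \<tau> \<sigma>_in mindist_bounds frac_lt_1 in \<open>auto simp: comp_def\<close>)
  have "pi^2 * circle_form M x \<tau>
      = (\<Sum>r<M. \<Sum>r'<M. pair_weight (\<lambda>r. mindist M x (\<sigma> r)) (\<lambda>r. \<tau> (\<sigma> r)) r r'
          * recip_sq_series (frac (x (\<sigma> r)) - frac (x (\<sigma> r'))))"
    unfolding circle_form_eq_recip_sq_series[OF distinct] pair_weight_def
    by (rule sum_sum_reindex_bij_betw[OF \<sigma>, symmetric])
  also have "\<dots> \<le> C * (\<Sum>r<M. (\<tau> (\<sigma> r))^2)"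
    by (rule series_form_le[OF assms])
  also have "\<dots> = C * (\<Sum>m\<in>{1..M}. (\<tau> m)^2)"
    using sum.reindex_bij_betw[OF \<sigma>, of "\<lambda>m. (\<tau> m)^2"] by simp
  finally show "circle_form M x \<tau> \<le> C / pi^2 * (\<Sum>m\<in>{1..M}. (\<tau> m)^2)"
    by (simp add: field_simps)
qed

section \<open>Scaling\<close>

lemma scaled_points:
  assumes "strict_mono (lam :: int \<Rightarrow> real)" "0 < \<epsilon>" "\<epsilon> * (lam (int N) - lam 1) \<le> 1/2"
    and "m \<in> {1..N}" "n \<in> {1..N}"
  shows "\<bar>\<epsilon> * lam (int m) - \<epsilon> * lam (int n)\<bar> \<le> 1/2"
    and "m \<noteq> n \<Longrightarrow> \<epsilon> * lam (int m) - \<epsilon> * lam (int n) \<notin> \<int>"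
proof -
  have "lam 1 \<le> lam (int k) \<and> lam (int k) \<le> lam (int N)" if "k \<in> {1..N}" for k
    using that assms(1) by (auto simp: strict_mono_less_eq)
  from this[OF assms(4)] this[OF assms(5)]
  have "\<bar>lam (int m) - lam (int n)\<bar> \<le> lam (int N) - lam 1"
    by linarith
  then have "\<epsilon> * \<bar>lam (int m) - lam (int n)\<bar> \<le> 1/2"
    using assms(2,3) by (meson mult_left_mono order_trans less_imp_le)
  then show close: "\<bar>\<epsilon> * lam (int m) - \<epsilon> * lam (int n)\<bar> \<le> 1/2"
    using assms(2) by (simp add: abs_mult flip: right_diff_distrib)
  assume "m \<noteq> n"
  then have "\<epsilon> * lam (int m) - \<epsilon> * lam (int n) \<noteq> 0"
    using assms(1,2) strict_mono_eq[OF assms(1)] by auto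
  with close show "\<epsilon> * lam (int m) - \<epsilon> * lam (int n) \<notin> \<int>"
    using Ints_abs_less_1 by fastforce
qed

lemma scaled_mindist_ge:
  assumes "2 \<le> N" "strict_mono lam" "0 < \<epsilon>" "\<epsilon> * (lam (int N) - lam 1) \<le> 1/2" "m \<in> {1..N}"
  shows "\<epsilon> * gapdelta lam (int m) \<le> mindist N (\<lambda>k. \<epsilon> * lam (int k)) m"
proof (rule mindist_ge[OF assms(1,5)])
  fix n assume n: "n \<in> {1..N}" "n \<noteq> m"
  then have "\<epsilon> * gapdelta lam (int m) \<le> \<epsilon> * \<bar>lam (int n) - lam (int m)\<bar>"
    using assms(2,3) by (intro mult_left_mono gapdelta_le_dist) auto
  also have "\<dots> = dnint (\<epsilon> * lam (int n) - \<epsilon> * lam (int m))"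
    using dnint_eq_abs[OF scaled_points(1)[OF assms(2-4) n(1) assms(5)]] assms(3)
    by (simp add: abs_mult flip: right_diff_distrib)
  finally show "\<epsilon> * gapdelta lam (int m) \<le> dnint (\<epsilon> * lam (int n) - \<epsilon> * lam (int m))" .
qed

lemma divide_sq_le_pi_sq_divide_sin_sq:
  assumes "0 \<le> a" "a \<le> b" "y \<notin> \<int>"
  shows "a / y^2 \<le> pi^2 * (b / (sin (pi * y))^2)"
proof -
  have "0 < (sin (pi * y))^2"
    using sin_pi_neq_0[OF assms(3)] by simp
  moreover have "(sin (pi * y))^2 \<le> (pi * y)^2"
    using abs_sin_x_le_abs_x by (metis abs_ge_zero power2_abs power_mono)
  ultimately have "pi^2 * a / (pi * y)^2 \<le> pi^2 * b / (sin (pi * y))^2"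
    using assms(1,2) by (intro frac_le) auto
  then show ?thesis
    by (simp add: power_mult_distrib)
qed

lemma line_form_le_scaled_circle_form:
  assumes "2 \<le> N" "strict_mono lam" "\<forall>n\<in>{1..int N}. t n \<ge> 0"
    and "0 < \<epsilon>" "\<epsilon> * (lam (int N) - lam 1) \<le> 1/2"
  shows "line_form N lam t \<le> pi^2 * circle_form N (\<lambda>m. \<epsilon> * lam (int m)) (\<lambda>m. t (int m))"
proof -
  define x where "x = (\<lambda>m. \<epsilon> * lam (int m))"
  define \<tau> where "\<tau> = (\<lambda>m. t (int m))"
  have gap_nonneg: "0 \<le> gapdelta lam k" for k
    using gapdelta_pos[OF assms(2)] less_imp_le by blast
  have term_le: "pair_weight (gapdelta lam) t (int m) (int n) / (lam (int m) - lam (int n))^2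
      \<le> pi^2 * (pair_weight (mindist N x) \<tau> m n / (sin (pi * (x m - x n)))^2)"
    if m: "m \<in> {1..N}" and n: "n \<in> {1..N} - {m}" for m n
  proof -
    have "pair_weight (gapdelta lam) t (int m) (int n) / (lam (int m) - lam (int n))^2
        = pair_weight (\<lambda>k. \<epsilon> * gapdelta lam (int k)) \<tau> m n / (x m - x n)^2"
      using assms(4) gap_nonneg
      by (simp add: pair_weight_scale x_def \<tau>_def power_mult_distrib flip: right_diff_distrib)
        (simp add: pair_weight_def)
    also have "\<dots> \<le> pi^2 * (pair_weight (mindist N x) \<tau> m n / (sin (pi * (x m - x n)))^2)"
      unfolding x_def \<tau>_def using assms m n gap_nonneg scaled_mindist_ge scaled_points(2)
      by (intro divide_sq_le_pi_sq_divide_sin_sq pair_weight_nonneg pair_weight_mono)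
        (auto intro: mult_nonneg_nonneg)
    finally show ?thesis .
  qed
  have "line_form N lam t
      = (\<Sum>m\<in>{1..N}. \<Sum>n\<in>{1..N} - {m}.
           pair_weight (gapdelta lam) t (int m) (int n) / (lam (int m) - lam (int n))^2)"
    unfolding line_form_def by (rule sum_off_diagonal_of_nat)
  also have "\<dots> \<le> pi^2 * (\<Sum>m\<in>{1..N}. \<Sum>n\<in>{1..N} - {m}.
      pair_weight (mindist N x) \<tau> m n / (sin (pi * (x m - x n)))^2)"
    unfolding sum_distrib_left by (intro sum_mono term_le) auto
  also have "\<dots> \<le> pi^2 * circle_form N x \<tau>"
    unfolding circle_form_def by (simp add: sum_nonneg)
  finally show ?thesis
    unfolding x_def \<tau>_def .
qed

lemma circle_inequality_imp_line_inequality: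
  assumes "0 \<le> C" "circle_inequality C"
  shows "line_inequality C"
  unfolding line_inequality_def
proof (intro allI impI)
  fix N :: nat and lam t :: "int \<Rightarrow> real"
  assume N: "N \<ge> 1" and mono: "strict_mono lam" and t: "\<forall>n\<in>{1..int N}. t n \<ge> 0"
  show "line_form N lam t \<le> C * (\<Sum>n\<in>{1..int N}. (t n)^2)"
  proof (cases "N = 1")
    case True
    with assms(1) show ?thesis
      by (simp add: line_form_def)
  next
    case False
    with N have "2 \<le> N"
      by simp
    define \<epsilon> where "\<epsilon> = 1 / (2 * (lam (int N) - lam 1))"
    have "lam 1 < lam (int N)"
      using \<open>2 \<le> N\<close> mono by (simp add: strict_mono_less)
    then have \<epsilon>: "0 < \<epsilon>" "\<epsilon> * (lam (int N) - lam 1) \<le> 1/2"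
      by (simp_all add: \<epsilon>_def)
    have "line_form N lam t \<le> pi^2 * circle_form N (\<lambda>m. \<epsilon> * lam (int m)) (\<lambda>m. t (int m))"
      by (rule line_form_le_scaled_circle_form[OF \<open>2 \<le> N\<close> mono t \<epsilon>])
    also have "\<dots> \<le> pi^2 * (C / pi^2 * (\<Sum>m\<in>{1..N}. (t (int m))^2))"
      using assms(2) N t scaled_points(2)[OF mono \<epsilon>]
      unfolding circle_inequality_def by (intro mult_left_mono) auto
    also have "\<dots> = C * (\<Sum>n\<in>{1..int N}. (t n)^2)"
      by (simp add: sum_atLeastAtMost_of_nat)
    finally show ?thesis .
  qed
qed

theorem lemma7:
  fixes C3 :: real
  assumes "C3 > 0"
  shows "(\<forall>(N::nat) (lam::int \<Rightarrow> real) (t::int \<Rightarrow> real).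
            N \<ge> 1 \<longrightarrow> strict_mono lam \<longrightarrow> (\<forall>n\<in>{1..int N}. t n \<ge> 0) \<longrightarrow>
            (\<Sum>m\<in>{1..int N}. \<Sum>n\<in>{1..int N} - {m}.
               gapdelta lam m powr (3/2) * gapdelta lam n powr (1/2) * t m * t n
                 / (lam m - lam n)^2)
            \<le> C3 * (\<Sum>n\<in>{1..int N}. (t n)^2))
     \<longleftrightarrow>
     (\<forall>(M::nat) (x::nat \<Rightarrow> real) (\<tau>::nat \<Rightarrow> real).
            M \<ge> 1 \<longrightarrow>
            (\<forall>m\<in>{1..M}. \<forall>n\<in>{1..M}. m \<noteq> n \<longrightarrow> x m - x n \<notin> \<int>) \<longrightarrow>
            (\<forall>m\<in>{1..M}. \<tau> m \<ge> 0) \<longrightarrow>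
            (1/3) * (\<Sum>m\<in>{1..M}. (mindist M x m)^2 * (\<tau> m)^2)
            + (\<Sum>m\<in>{1..M}. \<Sum>n\<in>{1..M} - {m}.
                 mindist M x m powr (3/2) * mindist M x n powr (1/2) * \<tau> m * \<tau> n
                   / (sin (pi * (x m - x n)))^2)
            \<le> C3 / pi^2 * (\<Sum>m\<in>{1..M}. (\<tau> m)^2))"
proof -
  have "line_inequality C3 \<longleftrightarrow> circle_inequality C3"
    using assms line_inequality_imp_circle_inequality circle_inequality_imp_line_inequality by auto
  then show ?thesis
    unfolding line_inequality_def circle_inequality_def line_form_def circle_form_def pair_weight_def .
qed

end
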